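(* Consider the minimax Markov control model on Borel spaces described in the context, let $\rho,h:{\cal X}\to[0,\infty)$ be bounded, continuous, measurable functions whose suprema and infima over ${\cal X}$ are attained, and let $\varphi\in\mathbb{F}$ be a selector. Then $(\rho,h,\varphi)$ is a canonical triplet if and only if for every $x\in{\cal X}$: (a) $\displaystyle\rho(x)=\inf_{u\in{\cal U}(x)}\sup_{Q(\cdot|x,u)\in\mathbf{B}_R(Q^o)(x,u)}\int_{\cal X}\rho(z)\,Q(dz|x,u)$; (b) $\displaystyle\rho(x)+h(x)=\inf_{u\in{\cal U}(x)}\sup_{Q(\cdot|x,u)\in\mathbf{B}_R(Q^o)(x,u)}\Big\{f(x,u)+\int_{\cal X}h(z)\,Q(dz|x,u)\Big\}$; (c) $\varphi(x)$ attains the infimum in both (a) and (b), i.e. $\displaystyle\rho(x)=\sup_{Q(\cdot|x,\varphi(x))\in\mathbf{B}_R(Q^o)(x,\varphi(x))}\int_{\cal X}\rho(z)Q(dz|x,\varphi(x))$ and $\displaystyle\rho(x)+h(x)=\sup_{Q(\cdot|x,\varphi(x))\in\mathbf{B}_R(Q^o)(x,\varphi(x))}\Big\{f(x,\varphi(x))+\int_{\cal X}h(z)Q(dz|x,\varphi(x))\Big\}$.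
   Context: Model: ${\cal X},{\cal U}$ are Polish spaces with Borel $\sigma$-algebras; for each $x$, ${\cal U}(x)\subseteq{\cal U}$ is a nonempty compact measurable set of feasible controls; $\mathbb{K}=\{(x,u):x\in{\cal X},u\in{\cal U}(x)\}$; $\mathbb{F}$ is the (assumed nonempty) set of measurable maps $\varphi:{\cal X}\to{\cal U}$ with $\varphi(x)\in{\cal U}(x)$ for all $x$ (selectors). $f:\mathbb{K}\to[0,\infty)$ is bounded and continuous; $Q^o(\cdot|x,u)$ is a stochastic kernel on ${\cal X}$ given $(x,u)\in\mathbb{K}$ with $Q^o(A|\cdot,\cdot)$ continuous on $\mathbb{K}$ for every Borel $A$. For probability measures, $\|\alpha-\beta\|_{TV}=\sup_P\sum_{F\in P}|\alpha(F)-\beta(F)|$, supremum over finite measurable partitions $P$ of ${\cal X}$. $R\in[0,2]$ and $\mathbf{B}_R(Q^o)(x,u)=\{Q(\cdot|x,u)\text{ probability on }{\cal X}:\|Q(\cdot|x,u)-Q^o(\cdot|x,u)\|_{TV}\le R\}$. Minimax $n$-stage costs with terminal cost $h$: $J_0^*(x,h)=h(x)$ and $J^*_{n+1}(x,h)=\inf_{u\in{\cal U}(x)}\sup_{Q(\cdot|x,u)\in\mathbf{B}_R(Q^o)(x,u)}\{f(x,u)+\int J^*_n(z,h)Q(dz|x,u)\}$; for the stationary policy $g^\infty$ that uses $\varphi$ at every stage, $J_0(g^\infty,x,h)=h(x)$ and $J_{n+1}(g^\infty,x,h)=\sup_{Q(\cdot|x,\varphi(x))\in\mathbf{B}_R(Q^o)(x,\varphi(x))}\{f(x,\varphi(x))+\int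 J_n(g^\infty,z,h)Q(dz|x,\varphi(x))\}$. Canonical triplet: $(\rho,h,\varphi)$, with $\rho,h$ real-valued bounded continuous nonnegative measurable functions on ${\cal X}$ and $\varphi\in\mathbb{F}$, is canonical if $J_n(g^\infty,x,h)=J^*_n(x,h)=n\rho(x)+h(x)$ for all $x\in{\cal X}$ and all $n=0,1,2,\dots$. *)

theory Defs
  imports "HOL-Probability.Probability"
begin

definition tv_dist :: "'a::topological_space measure \<Rightarrow> 'a measure \<Rightarrow> real" where
  "tv_dist \<alpha> \<beta> = Sup {(\<Sum>F\<in>P. \<bar>measure \<alpha> F - measure \<beta> F\<bar>) | P.
      finite P \<and> P \<subseteq> sets borel \<and> disjoint P \<and> \<Union>P = UNIV}"

definition tv_ball :: "real \<Rightarrow> 'a::topological_space measure \<Rightarrow> 'a measure set" where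
  "tv_ball R Q0 = {Q. sets Q = sets borel \<and> prob_space Q \<and> tv_dist Q Q0 \<le> R}"

primrec Jstar :: "('x::topological_space \<Rightarrow> 'u set) \<Rightarrow> ('x \<Rightarrow> 'u \<Rightarrow> real)
    \<Rightarrow> ('x \<Rightarrow> 'u \<Rightarrow> 'x measure) \<Rightarrow> real \<Rightarrow> nat \<Rightarrow> ('x \<Rightarrow> real) \<Rightarrow> 'x \<Rightarrow> real" where
  "Jstar U f Qo R 0 h x = h x"
| "Jstar U f Qo R (Suc n) h x =
     (INF u\<in>U x. SUP Q\<in>tv_ball R (Qo x u). f x u + integral\<^sup>L Q (Jstar U f Qo R n h))"

primrec Jpol :: "('x::topological_space \<Rightarrow> 'u) \<Rightarrow> ('x \<Rightarrow> 'u \<Rightarrow> real)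
    \<Rightarrow> ('x \<Rightarrow> 'u \<Rightarrow> 'x measure) \<Rightarrow> real \<Rightarrow> nat \<Rightarrow> ('x \<Rightarrow> real) \<Rightarrow> 'x \<Rightarrow> real" where
  "Jpol \<phi> f Qo R 0 h x = h x"
| "Jpol \<phi> f Qo R (Suc n) h x =
     (SUP Q\<in>tv_ball R (Qo x (\<phi> x)). f x (\<phi> x) + integral\<^sup>L Q (Jpol \<phi> f Qo R n h))"

definition selectors :: "('x::topological_space \<Rightarrow> 'u::topological_space set) \<Rightarrow> ('x \<Rightarrow> 'u) set" where
  "selectors U = {\<phi>. \<phi> \<in> borel_measurable borel \<and> (\<forall>x. \<phi> x \<in> U x)}"

definition canonical_triplet ::
  "('x::topological_space \<Rightarrow> 'u::topological_space set) \<Rightarrow> ('x \<Rightarrow> 'u \<Rightarrow> real)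
    \<Rightarrow> ('x \<Rightarrow> 'u \<Rightarrow> 'x measure) \<Rightarrow> real
    \<Rightarrow> ('x \<Rightarrow> real) \<Rightarrow> ('x \<Rightarrow> real) \<Rightarrow> ('x \<Rightarrow> 'u) \<Rightarrow> bool" where
  "canonical_triplet U f Qo R \<rho> h \<phi> \<longleftrightarrow>
     bounded (range \<rho>) \<and> continuous_on UNIV \<rho> \<and> (\<forall>x. 0 \<le> \<rho> x) \<and> \<rho> \<in> borel_measurable borel \<and>
     bounded (range h) \<and> continuous_on UNIV h \<and> (\<forall>x. 0 \<le> h x) \<and> h \<in> borel_measurable borel \<and>
     \<phi> \<in> selectors U \<and>
     (\<forall>n x. Jpol \<phi> f Qo R n h x = Jstar U f Qo R n h x \<and>
            Jstar U f Qo R n h x = real n * \<rho> x + h x)"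

end

theory Submission
  imports Defs
begin

(* Write T(x,u) g (worst_integral x u g below) for the supremum of the integral of g over the
   total-variation ball of radius R around Qo(.|x,u).

   If J_n = n rho + h for all n, the minimax recursion gives
   inf_u sup_Q (n * int rho dQ + f + int h dQ) = n rho + rho + h.  The terms not multiplied by n are
   bounded, so dividing by n and letting n tend to infinity yields (a); n = 0 yields (b).  The
   stationary policy is the minimax recursion over the one-point action sets {phi x}, so the same
   computation yields (c).

   Conversely, sup_Q (n * int rho dQ + f + int h dQ) splits as n T rho + f + T h as soon as the ball
   is a single point (R = 0) or rho is constant, and one of the two always holds: at a minimum
   point x0 of rho, moving mass R/2 of Qo(.|x0,u) to a point where rho is larger stays inside the
   ball and pushes the integral of rho strictly above rho x0, contradicting (a).  With the split,
   (a)-(c) give J_n = n rho + h by induction, for the minimax and the stationary recursion alike. *)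

section \<open>Total variation balls\<close>

lemma partition_sum_abs_diff_le:
  assumes "finite_measure M" "finite_measure N" "sets M = sets borel" "sets N = sets borel"
    and "finite P" "P \<subseteq> sets borel" "disjoint P"
  shows "(\<Sum>F\<in>P. \<bar>measure M F - measure N F\<bar>) \<le> measure M (\<Union>P) + measure N (\<Union>P)"
proof -
  have disj: "disjoint_family_on id P"
    using \<open>disjoint P\<close> by (auto simp: disjoint_def disjoint_family_on_def)
  have "(\<Sum>F\<in>P. \<bar>measure M F - measure N F\<bar>) \<le> (\<Sum>F\<in>P. measure M F) + (\<Sum>F\<in>P. measure N F)"
    unfolding sum.distrib[symmetric] by (rule sum_mono) (simp add: abs_le_iff add_increasing)
  also have "\<dots> = measure M (\<Union>P) + measure N (\<Union>P)"
    using finite_measure.finite_measure_finite_Union[OF assms(1,5), of id]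
      finite_measure.finite_measure_finite_Union[OF assms(2,5), of id] assms disj
    by (simp add: Sup_set_def)
  finally show ?thesis .
qed

lemma bdd_above_tv_partition_sums:
  assumes "prob_space M" "prob_space N" "sets M = sets borel" "sets N = sets borel"
  shows "bdd_above {(\<Sum>F\<in>P. \<bar>measure M F - measure N F\<bar>) | P.
      finite P \<and> P \<subseteq> sets borel \<and> disjoint P \<and> \<Union>P = UNIV}"
proof (rule bdd_aboveI[where M=2], clarify)
  fix P :: "'a set set" assume P: "finite P" "P \<subseteq> sets borel" "disjoint P" "\<Union>P = UNIV"
  have "(\<Sum>F\<in>P. \<bar>measure M F - measure N F\<bar>) \<le> measure M (\<Union>P) + measure N (\<Union>P)"
    using assms P by (intro partition_sum_abs_diff_le) (auto intro: prob_space.finite_measure)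
  also have "\<dots> \<le> 2"
    using prob_space.prob_le_1[OF assms(1), of "\<Union>P"] prob_space.prob_le_1[OF assms(2), of "\<Union>P"]
    by linarith
  finally show "(\<Sum>F\<in>P. \<bar>measure M F - measure N F\<bar>) \<le> 2" .
qed

lemma tv_dist_self: "tv_dist M M = 0"
proof -
  have "{UNIV} \<subseteq> sets (borel :: 'a measure)" by simp
  then have "{(\<Sum>F\<in>P. \<bar>measure M F - measure M F\<bar>) | P.
      finite P \<and> P \<subseteq> sets borel \<and> disjoint P \<and> \<Union>P = UNIV} = {0::real}"
    by (auto intro!: exI[of _ "{UNIV}"] simp: disjoint_def)
  then show ?thesis unfolding tv_dist_def by simp
qed

lemma eq_if_tv_dist_le_0:
  assumes "prob_space M" "prob_space N" "sets M = sets borel" "sets N = sets borel"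
    and "tv_dist M N \<le> 0"
  shows "M = N"
proof (rule measure_eqI)
  show "sets M = sets N" using assms by simp
  fix A assume "A \<in> sets M"
  then have A: "A \<in> sets borel" "-A \<in> sets borel" using assms by auto
  have "\<bar>measure M A - measure N A\<bar> \<le> (\<Sum>F\<in>{A, -A}. \<bar>measure M F - measure N F\<bar>)"
  proof -
    have "A \<noteq> -A" by auto
    then show ?thesis by simp
  qed
  also have "\<dots> \<le> tv_dist M N" unfolding tv_dist_def
    by (rule cSup_upper[OF _ bdd_above_tv_partition_sums[OF assms(1-4)]])
      (use A in \<open>auto simp: disjoint_def\<close>)
  finally have "measure M A = measure N A" using assms(5) by simp
  then show "emeasure M A = emeasure N A"
    using assms by (metis finite_measure.emeasure_eq_measure prob_space.finite_measure)
qed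

lemma self_in_tv_ball:
  "prob_space N \<Longrightarrow> sets N = sets borel \<Longrightarrow> 0 \<le> R \<Longrightarrow> N \<in> tv_ball R N"
  by (simp add: tv_ball_def tv_dist_self)

lemma tv_ball_0:
  assumes "prob_space N" "sets N = sets borel"
  shows "tv_ball 0 N = {N}"
  using assms self_in_tv_ball[OF assms] eq_if_tv_dist_le_0[OF _ assms(1) _ assms(2)]
  by (auto simp: tv_ball_def)

lemma point_mass_mixture_exists:
  fixes N :: "'a::topological_space measure"
  assumes N: "prob_space N" "sets N = sets borel" and t: "0 \<le> t" "t \<le> 1"
  obtains Q where "sets Q = sets borel" "prob_space Q"
    "\<And>A. A \<in> sets borel \<Longrightarrow> measure Q A = (1 - t) * measure N A + t * indicator A y"
proof -
  define \<mu> where "\<mu> A = ennreal (1 - t) * emeasure N A + ennreal t * indicator A y" for A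
  define Q where "Q = measure_of UNIV (sets borel) \<mu>"
  have sa: "sigma_algebra UNIV (sets (borel :: 'a measure))"
    using sets.sigma_algebra_axioms[of borel] by simp
  have "countably_additive (sets borel) \<mu>"
  proof (rule countably_additiveI)
    fix A :: "nat \<Rightarrow> 'a set" assume A: "range A \<subseteq> sets borel" "disjoint_family A"
    have "(\<Sum>i. \<mu> (A i)) = (\<Sum>i. ennreal (1 - t) * emeasure N (A i)) + (\<Sum>i. ennreal t * indicator (A i) y)"
      unfolding \<mu>_def by (rule suminf_add[symmetric]) auto
    also have "\<dots> = \<mu> (\<Union>i. A i)"
      unfolding \<mu>_def using A N by (simp add: ennreal_suminf_cmult suminf_emeasure suminf_indicator)
    finally show "(\<Sum>i. \<mu> (A i)) = \<mu> (\<Union>i. A i)" .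
  qed
  moreover have "positive (sets borel) \<mu>" by (simp add: positive_def \<mu>_def)
  ultimately have emeasure_Q: "emeasure Q A = \<mu> A" if "A \<in> sets borel" for A
    unfolding Q_def using emeasure_measure_of_sigma[OF sa] that by blast
  have \<mu>_real: "\<mu> A = ennreal ((1 - t) * measure N A + t * indicator A y)" for A
    using N t unfolding \<mu>_def
    by (subst ennreal_plus)
      (auto simp: ennreal_mult ennreal_indicator finite_measure.emeasure_eq_measure prob_space.finite_measure)
  show ?thesis
  proof
    show sets_Q: "sets Q = sets borel"
      unfolding Q_def using sigma_algebra.sigma_sets_eq[OF sa] by (simp add: sets_measure_of_conv)
    show "measure Q A = (1 - t) * measure N A + t * indicator A y" if "A \<in> sets borel" for A
      using emeasure_Q[OF that] \<mu>_real[of A] t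
      by (intro measure_eq_emeasure_eq_ennreal) (auto simp: measure_nonneg)
    have "measure N UNIV = 1"
      using prob_space.prob_space[OF N(1)] sets_eq_imp_space_eq[OF N(2)] by simp
    then show "prob_space Q"
      using emeasure_Q[of UNIV] \<mu>_real[of UNIV] by (intro prob_spaceI) (simp add: Q_def)
  qed
qed

lemma tv_dist_point_mass_mixture_le:
  fixes N Q :: "'a::topological_space measure"
  assumes N: "prob_space N" "sets N = sets borel" and t: "0 \<le> t"
    and Q: "\<And>A. A \<in> sets borel \<Longrightarrow> measure Q A = (1 - t) * measure N A + t * indicator A y"
  shows "tv_dist Q N \<le> 2 * t"
  unfolding tv_dist_def
proof (rule cSup_least)
  show "{(\<Sum>F\<in>P. \<bar>measure Q F - measure N F\<bar>) | P.
      finite P \<and> P \<subseteq> sets borel \<and> disjoint P \<and> \<Union>P = UNIV} \<noteq> {}"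
    by (auto intro!: exI[of _ "{UNIV}"] simp: disjoint_def)
next
  fix s assume "s \<in> {(\<Sum>F\<in>P. \<bar>measure Q F - measure N F\<bar>) | P.
      finite P \<and> P \<subseteq> sets borel \<and> disjoint P \<and> \<Union>P = UNIV}"
  then obtain P where P: "finite P" "P \<subseteq> sets borel" "disjoint P" "\<Union>P = UNIV"
    and s: "s = (\<Sum>F\<in>P. \<bar>measure Q F - measure N F\<bar>)" by auto
  have "s = t * (\<Sum>F\<in>P. \<bar>measure (return borel y) F - measure N F\<bar>)"
    unfolding s sum_distrib_left
  proof (rule sum.cong[OF refl])
    fix F assume "F \<in> P"
    then have "F \<in> sets borel" using P by auto
    then have "measure Q F - measure N F = t * (measure (return borel y) F - measure N F)"
      using Q by (simp add: measure_return algebra_simps)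
    then show "\<bar>measure Q F - measure N F\<bar> = t * \<bar>measure (return borel y) F - measure N F\<bar>"
      using t by (simp add: abs_mult)
  qed
  also have "\<dots> \<le> t * (measure (return borel y) (\<Union>P) + measure N (\<Union>P))"
    using N P t prob_space_return[of y borel]
    by (intro mult_left_mono partition_sum_abs_diff_le) (auto intro: prob_space.finite_measure)
  also have "\<dots> = 2 * t"
    using P(4) prob_space.prob_space[OF N(1)] sets_eq_imp_space_eq[OF N(2)]
    by (simp add: measure_return)
  finally show "s \<le> 2 * t" .
qed

lemma tv_ball_point_mass_mixture:
  fixes N :: "'a::topological_space measure"
  assumes "prob_space N" "sets N = sets borel" "0 \<le> R" "R \<le> 2"
  obtains Q where "Q \<in> tv_ball R N"
    "\<And>A. A \<in> sets borel \<Longrightarrow> measure Q A = (1 - R / 2) * measure N A + R / 2 * indicator A y"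
proof -
  obtain Q where "sets Q = sets borel" "prob_space Q"
    and Q: "\<And>A. A \<in> sets borel \<Longrightarrow> measure Q A = (1 - R / 2) * measure N A + R / 2 * indicator A y"
    using point_mass_mixture_exists[OF assms(1,2), of "R / 2"] assms(3,4) by auto
  moreover have "tv_dist Q N \<le> R"
    using tv_dist_point_mass_mixture_le[OF assms(1,2) _ Q] assms(3) by simp
  ultimately show ?thesis using that by (simp add: tv_ball_def)
qed

lemma
  fixes g :: "'a::topological_space \<Rightarrow> real"
  assumes Q: "Q \<in> tv_ball R N" and g: "g \<in> borel_measurable borel" "\<And>z. \<bar>g z\<bar> \<le> K"
  shows integrable_if_in_tv_ball: "integrable Q g"
    and abs_integral_le_if_in_tv_ball: "\<bar>integral\<^sup>L Q g\<bar> \<le> K"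
proof -
  interpret prob_space Q using Q by (simp add: tv_ball_def)
  have "sets Q = sets borel" using Q by (simp add: tv_ball_def)
  then have "g \<in> borel_measurable Q" using g(1) measurable_cong_sets by blast
  then show int: "integrable Q g" using g(2) by (intro integrable_const_bound[where B=K]) auto
  have "- K \<le> g z \<and> g z \<le> K" for z using g(2)[of z] by arith
  then have "integral\<^sup>L Q g \<le> K" "- K \<le> integral\<^sup>L Q g"
    by (auto intro!: integral_le_const[OF int] integral_ge_const[OF int] AE_I2)
  then show "\<bar>integral\<^sup>L Q g\<bar> \<le> K" by linarith
qed

lemma bdd_above_tv_ball_integrals:
  fixes g :: "'a::topological_space \<Rightarrow> real"
  assumes "g \<in> borel_measurable borel" "\<And>z. \<bar>g z\<bar> \<le> K"
  shows "bdd_above ((\<lambda>Q. integral\<^sup>L Q g) ` tv_ball R N)"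
proof (rule bdd_aboveI2[where M=K])
  fix Q assume "Q \<in> tv_ball R N"
  from abs_integral_le_if_in_tv_ball[OF this assms] show "integral\<^sup>L Q g \<le> K" by linarith
qed

lemma tv_ball_integral_ge_point_mass:
  fixes g :: "'a::topological_space \<Rightarrow> real"
  assumes N: "prob_space N" "sets N = sets borel" and R: "0 \<le> R" "R \<le> 2"
    and g: "g \<in> borel_measurable borel" "\<And>z. \<bar>g z\<bar> \<le> K" "\<And>z. m \<le> g z"
    and d: "0 \<le> d" "m + d < g y"
  obtains Q where "Q \<in> tv_ball R N" "m + d * (R / 2) \<le> integral\<^sup>L Q g"
proof -
  obtain Q where Q: "Q \<in> tv_ball R N"
    and measure_Q: "\<And>A. A \<in> sets borel \<Longrightarrow>
      measure Q A = (1 - R / 2) * measure N A + R / 2 * indicator A y"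
    using tv_ball_point_mass_mixture[OF N R] by blast
  interpret prob_space Q using Q by (simp add: tv_ball_def)
  define S where "S = {z. m + d < g z}"
  have S: "S \<in> sets borel" unfolding S_def using g(1) by measurable
  then have "S \<in> sets Q" using Q by (simp add: tv_ball_def)
  have "y \<in> S" using d(2) by (simp add: S_def)
  then have "measure Q S = (1 - R / 2) * measure N S + R / 2"
    using measure_Q[OF S] by simp
  moreover have "0 \<le> (1 - R / 2) * measure N S" using R by simp
  ultimately have "R / 2 \<le> measure Q S" by linarith
  then have "m + d * (R / 2) \<le> m + d * measure Q S"
    by (rule add_left_mono[OF mult_left_mono[OF _ d(1)]])
  also have "\<dots> = integral\<^sup>L Q (\<lambda>z. m + d * indicator S z)"
    using \<open>S \<in> sets Q\<close>
    by (subst Bochner_Integration.integral_add)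
      (auto simp: prob_space emeasure_finite less_top[symmetric] intro!: integrable_real_indicator)
  also have "\<dots> \<le> integral\<^sup>L Q g"
  proof (rule integral_mono[OF _ integrable_if_in_tv_ball[OF Q g(1,2)]])
    show "integrable Q (\<lambda>z. m + d * indicator S z)"
      using S d(1) by (intro integrable_if_in_tv_ball[OF Q, where K="\<bar>m\<bar> + d"]) (auto simp: indicator_def)
    show "m + d * indicator S z \<le> g z" for z
      using g(3)[of z] by (auto simp: S_def indicator_def)
  qed
  finally show ?thesis using Q that by blast
qed

section \<open>Suprema and infima of bounded families\<close>

lemma cSUP_abs_diff_le:
  fixes F G :: "'a \<Rightarrow> real"
  assumes "A \<noteq> {}" "bounded (F ` A)" "bounded (G ` A)" "\<And>x. x \<in> A \<Longrightarrow> \<bar>F x - G x\<bar> \<le> C"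
  shows "\<bar>(SUP x\<in>A. F x) - (SUP x\<in>A. G x)\<bar> \<le> C"
proof -
  have "(SUP x\<in>A. F x) \<le> (SUP x\<in>A. G x) + C"
    using assms cSUP_upper[OF _ bounded_imp_bdd_above[OF assms(3)]]
    by (intro cSUP_least) (force simp: abs_le_iff)+
  moreover have "(SUP x\<in>A. G x) \<le> (SUP x\<in>A. F x) + C"
    using assms cSUP_upper[OF _ bounded_imp_bdd_above[OF assms(2)]]
    by (intro cSUP_least) (force simp: abs_le_iff)+
  ultimately show ?thesis by linarith
qed

lemma cINF_abs_diff_le:
  fixes F G :: "'a \<Rightarrow> real"
  assumes "A \<noteq> {}" "bounded (F ` A)" "bounded (G ` A)" "\<And>x. x \<in> A \<Longrightarrow> \<bar>F x - G x\<bar> \<le> C"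
  shows "\<bar>(INF x\<in>A. F x) - (INF x\<in>A. G x)\<bar> \<le> C"
proof -
  have "(INF x\<in>A. G x) - C \<le> (INF x\<in>A. F x)"
    using assms cINF_lower[OF bounded_imp_bdd_below[OF assms(3)]]
    by (intro cINF_greatest) (force simp: abs_le_iff)+
  moreover have "(INF x\<in>A. F x) - C \<le> (INF x\<in>A. G x)"
    using assms cINF_lower[OF bounded_imp_bdd_below[OF assms(2)]]
    by (intro cINF_greatest) (force simp: abs_le_iff)+
  ultimately show ?thesis by linarith
qed

lemma cSUP_mult_left:
  fixes F :: "'a \<Rightarrow> real"
  assumes "0 \<le> c" "A \<noteq> {}" "bdd_above (F ` A)"
  shows "(SUP x\<in>A. c * F x) = c * (SUP x\<in>A. F x)"
  using continuous_at_Sup_mono[of "\<lambda>y. c * y" "F ` A"] assms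
  by (simp add: image_image mono_def mult_left_mono continuous_intros)

lemma cINF_mult_left:
  fixes F :: "'a \<Rightarrow> real"
  assumes "0 \<le> c" "A \<noteq> {}" "bdd_below (F ` A)"
  shows "(INF x\<in>A. c * F x) = c * (INF x\<in>A. F x)"
  using continuous_at_Inf_mono[of "\<lambda>y. c * y" "F ` A"] assms
  by (simp add: image_image mono_def mult_left_mono continuous_intros)

lemma eq_0_if_nat_multiples_bounded:
  fixes x K :: real
  assumes "\<And>n::nat. \<bar>real n * x\<bar> \<le> K"
  shows "x = 0"
proof (rule ccontr)
  assume "x \<noteq> 0"
  obtain n :: nat where "K / \<bar>x\<bar> < real n" using reals_Archimedean2 by blast
  then have "K < \<bar>real n * x\<bar>" using \<open>x \<noteq> 0\<close> by (simp add: field_simps abs_mult)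
  with assms[of n] show False by simp
qed

lemma abs_cSUP_mult_plus_diff_le:
  fixes a b :: "'q \<Rightarrow> real"
  assumes B: "B \<noteq> {}" and c: "0 \<le> c"
    and a: "\<And>q. q \<in> B \<Longrightarrow> \<bar>a q\<bar> \<le> M" and b: "\<And>q. q \<in> B \<Longrightarrow> \<bar>b q\<bar> \<le> C"
  shows "\<bar>(SUP q\<in>B. c * a q + b q) - c * (SUP q\<in>B. a q)\<bar> \<le> C"
proof -
  have ca: "\<bar>c * a q\<bar> \<le> c * M" if "q \<in> B" for q
    using a[OF that] c by (simp add: abs_mult mult_left_mono)
  have "bdd_above (a ` B)"
    using a by (intro bdd_aboveI2[where M=M]) (force simp: abs_le_iff)
  then have "c * (SUP q\<in>B. a q) = (SUP q\<in>B. c * a q)"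
    using cSUP_mult_left[OF c B] by simp
  moreover have "\<bar>(SUP q\<in>B. c * a q + b q) - (SUP q\<in>B. c * a q)\<bar> \<le> C"
  proof (rule cSUP_abs_diff_le[OF B])
    have "\<bar>c * a q + b q\<bar> \<le> c * M + C" if "q \<in> B" for q
      using ca[OF that] b[OF that] by arith
    then show "bounded ((\<lambda>q. c * a q + b q) ` B)"
      by (intro boundedI) auto
    show "bounded ((\<lambda>q. c * a q) ` B)"
      using ca by (intro boundedI) auto
  qed (use b in simp)
  ultimately show ?thesis by simp
qed

lemma INF_SUP_slope_eq:
  fixes a b :: "'u \<Rightarrow> 'q \<Rightarrow> real"
  assumes A: "A \<noteq> {}" and B: "\<And>u. u \<in> A \<Longrightarrow> B u \<noteq> {}"
    and a: "\<And>u q. u \<in> A \<Longrightarrow> q \<in> B u \<Longrightarrow> \<bar>a u q\<bar> \<le> M"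
    and b: "\<And>u q. u \<in> A \<Longrightarrow> q \<in> B u \<Longrightarrow> \<bar>b u q\<bar> \<le> C"
    and eq: "\<And>n::nat. (INF u\<in>A. SUP q\<in>B u. real n * a u q + b u q) = real n * r + c"
  shows "r = (INF u\<in>A. SUP q\<in>B u. a u q)"
proof -
  define I where "I = (INF u\<in>A. SUP q\<in>B u. a u q)"
  have sup_a: "\<bar>SUP q\<in>B u. a u q\<bar> \<le> M" if "u \<in> A" for u
    using a that B[OF that] by (intro cSup_abs_le) auto
  have "\<bar>real n * (r - I)\<bar> \<le> C + \<bar>c\<bar>" for n :: nat
  proof -
    have sup_diff: "\<bar>(SUP q\<in>B u. real n * a u q + b u q) - real n * (SUP q\<in>B u. a u q)\<bar> \<le> C"
      if "u \<in> A" for u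
      using B[OF that] a[OF that] b[OF that] by (rule abs_cSUP_mult_plus_diff_le[OF _ of_nat_0_le_iff])
    have "\<bar>(INF u\<in>A. SUP q\<in>B u. real n * a u q + b u q) - (INF u\<in>A. real n * (SUP q\<in>B u. a u q))\<bar> \<le> C"
    proof (rule cINF_abs_diff_le[OF A _ _ sup_diff])
      have n_sup_a: "\<bar>real n * (SUP q\<in>B u. a u q)\<bar> \<le> real n * M" if "u \<in> A" for u
        using sup_a[OF that] by (simp add: abs_mult mult_left_mono)
      then show "bounded ((\<lambda>u. real n * (SUP q\<in>B u. a u q)) ` A)"
        by (intro boundedI) auto
      have "\<bar>SUP q\<in>B u. real n * a u q + b u q\<bar> \<le> real n * M + C" if "u \<in> A" for u
        using n_sup_a[OF that] sup_diff[OF that] by arith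
      then show "bounded ((\<lambda>u. SUP q\<in>B u. real n * a u q + b u q) ` A)"
        by (intro boundedI) auto
    qed
    moreover have "(INF u\<in>A. real n * (SUP q\<in>B u. a u q)) = real n * I"
      unfolding I_def using A sup_a
      by (intro cINF_mult_left bdd_belowI2[where m="- M"]) (force simp: abs_le_iff)+
    ultimately show ?thesis unfolding eq by (simp add: algebra_simps)
  qed
  then have "r - I = 0" by (rule eq_0_if_nat_multiples_bounded)
  then show ?thesis unfolding I_def by simp
qed

section \<open>The minimax model\<close>

lemma Jpol_eq_Jstar_singleton: "Jpol \<phi> f Qo R n h = Jstar (\<lambda>x. {\<phi> x}) f Qo R n h"
proof (induction n)
  case 0
  show ?case by (simp add: fun_eq_iff)
next
  case (Suc n)
  show ?case by (simp add: fun_eq_iff Suc.IH)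
qed

locale tv_minimax_model =
  fixes U :: "'x::topological_space \<Rightarrow> 'u set"
    and f :: "'x \<Rightarrow> 'u \<Rightarrow> real"
    and Qo :: "'x \<Rightarrow> 'u \<Rightarrow> 'x measure"
    and R :: real
    and \<rho> h :: "'x \<Rightarrow> real"
  assumes U_ne: "\<And>x. U x \<noteq> {}"
    and f_bounded: "bounded ((\<lambda>(x, u). f x u) ` (SIGMA x:UNIV. U x))"
    and Qo_sets: "\<And>x u. u \<in> U x \<Longrightarrow> sets (Qo x u) = sets borel"
    and Qo_prob: "\<And>x u. u \<in> U x \<Longrightarrow> prob_space (Qo x u)"
    and R_nonneg: "0 \<le> R" and R_le_2: "R \<le> 2"
    and rho_meas: "\<rho> \<in> borel_measurable borel" and rho_bounded: "bounded (range \<rho>)"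
    and h_meas: "h \<in> borel_measurable borel" and h_bounded: "bounded (range h)"
begin

definition optimality_equations :: "('x \<Rightarrow> 'u) \<Rightarrow> bool" where
  "optimality_equations \<phi> \<longleftrightarrow> (\<forall>x.
     \<rho> x = (INF u\<in>U x. SUP Q\<in>tv_ball R (Qo x u). integral\<^sup>L Q \<rho>) \<and>
     \<rho> x + h x = (INF u\<in>U x. SUP Q\<in>tv_ball R (Qo x u). f x u + integral\<^sup>L Q h) \<and>
     \<rho> x = (SUP Q\<in>tv_ball R (Qo x (\<phi> x)). integral\<^sup>L Q \<rho>) \<and>
     \<rho> x + h x = (SUP Q\<in>tv_ball R (Qo x (\<phi> x)). f x (\<phi> x) + integral\<^sup>L Q h))"

definition worst_integral :: "'x \<Rightarrow> 'u \<Rightarrow> ('x \<Rightarrow> real) \<Rightarrow> real" where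
  "worst_integral x u g = (SUP Q\<in>tv_ball R (Qo x u). integral\<^sup>L Q g)"

lemma abs_bounds:
  "\<exists>K. \<forall>z. \<bar>\<rho> z\<bar> \<le> K" "\<exists>K. \<forall>z. \<bar>h z\<bar> \<le> K" "\<exists>C. \<forall>x. \<forall>u\<in>U x. \<bar>f x u\<bar> \<le> C"
  using rho_bounded h_bounded f_bounded unfolding bounded_iff by fastforce+

lemma Qo_in_tv_ball: "u \<in> U x \<Longrightarrow> Qo x u \<in> tv_ball R (Qo x u)"
  using self_in_tv_ball Qo_prob Qo_sets R_nonneg by blast

lemma abs_worst_integral_le:
  assumes "u \<in> U x" "g \<in> borel_measurable borel" "\<And>z. \<bar>g z\<bar> \<le> K"
  shows "\<bar>worst_integral x u g\<bar> \<le> K"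
  unfolding worst_integral_def
  using Qo_in_tv_ball[OF assms(1)] abs_integral_le_if_in_tv_ball[OF _ assms(2,3)]
  by (intro cSup_abs_le) auto

lemma SUP_const_plus_integral:
  assumes "u \<in> U x" "g \<in> borel_measurable borel" "\<And>z. \<bar>g z\<bar> \<le> K"
  shows "(SUP Q\<in>tv_ball R (Qo x u). c + integral\<^sup>L Q g) = c + worst_integral x u g"
  unfolding worst_integral_def
  using Qo_in_tv_ball[OF assms(1)] bdd_above_tv_ball_integrals[OF assms(2,3)]
  by (intro Sup_add_eq) auto

lemma Jstar_Suc_if_affine:
  assumes "Jstar V f Qo R n h = (\<lambda>z. real n * \<rho> z + h z)"
  shows "Jstar V f Qo R (Suc n) h x
    = (INF u\<in>V x. SUP Q\<in>tv_ball R (Qo x u). real n * integral\<^sup>L Q \<rho> + (f x u + integral\<^sup>L Q h))"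
proof -
  obtain K\<^sub>\<rho> K\<^sub>h where K: "\<And>z. \<bar>\<rho> z\<bar> \<le> K\<^sub>\<rho>" "\<And>z. \<bar>h z\<bar> \<le> K\<^sub>h"
    using abs_bounds by blast
  have step: "f x u + integral\<^sup>L Q (\<lambda>z. real n * \<rho> z + h z)
      = real n * integral\<^sup>L Q \<rho> + (f x u + integral\<^sup>L Q h)" if "Q \<in> tv_ball R N" for u Q N
  proof -
    have "integrable Q \<rho>" "integrable Q h"
      using integrable_if_in_tv_ball[OF that] rho_meas h_meas K by blast+
    then show ?thesis by simp
  qed
  show ?thesis
    unfolding Jstar.simps assms by (rule INF_cong[OF refl SUP_cong[OF refl step]])
qed

lemma optimality_if_Jstar_affine:
  assumes J: "\<And>n. Jstar V f Qo R n h = (\<lambda>z. real n * \<rho> z + h z)"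
    and V: "V x \<noteq> {}" "V x \<subseteq> U x"
  shows "\<rho> x = (INF u\<in>V x. SUP Q\<in>tv_ball R (Qo x u). integral\<^sup>L Q \<rho>)"
    and "\<rho> x + h x = (INF u\<in>V x. SUP Q\<in>tv_ball R (Qo x u). f x u + integral\<^sup>L Q h)"
proof -
  obtain K\<^sub>\<rho> K\<^sub>h C where K\<^sub>\<rho>: "\<And>z. \<bar>\<rho> z\<bar> \<le> K\<^sub>\<rho>" and K\<^sub>h: "\<And>z. \<bar>h z\<bar> \<le> K\<^sub>h"
    and C: "\<And>u. u \<in> U x \<Longrightarrow> \<bar>f x u\<bar> \<le> C"
    using abs_bounds by meson
  have ne: "tv_ball R (Qo x u) \<noteq> {}" if "u \<in> V x" for u
    using Qo_in_tv_ball that V(2) by blast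
  have a: "\<bar>integral\<^sup>L Q \<rho>\<bar> \<le> K\<^sub>\<rho>" if "Q \<in> tv_ball R N" for Q N
    by (rule abs_integral_le_if_in_tv_ball[OF that rho_meas K\<^sub>\<rho>])
  have b: "\<bar>f x u + integral\<^sup>L Q h\<bar> \<le> C + K\<^sub>h" if "u \<in> V x" "Q \<in> tv_ball R N" for u Q N
    using C that V(2) abs_integral_le_if_in_tv_ball[OF that(2) h_meas K\<^sub>h] by fastforce
  have slope: "(INF u\<in>V x. SUP Q\<in>tv_ball R (Qo x u). real n * integral\<^sup>L Q \<rho> + (f x u + integral\<^sup>L Q h))
      = real n * \<rho> x + (\<rho> x + h x)" for n
    using Jstar_Suc_if_affine[OF J, of n x] fun_cong[OF J[of "Suc n"], of x] by (simp add: algebra_simps)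
  show "\<rho> x = (INF u\<in>V x. SUP Q\<in>tv_ball R (Qo x u). integral\<^sup>L Q \<rho>)"
    by (rule INF_SUP_slope_eq[where a="\<lambda>u Q. integral\<^sup>L Q \<rho>" and b="\<lambda>u Q. f x u + integral\<^sup>L Q h",
          OF V(1) ne a b slope])
  show "\<rho> x + h x = (INF u\<in>V x. SUP Q\<in>tv_ball R (Qo x u). f x u + integral\<^sup>L Q h)"
    using Jstar_Suc_if_affine[OF J, of 0 x] fun_cong[OF J[of 1], of x] by simp
qed

lemma constant_if_minimum_optimal:
  assumes R_pos: "0 < R" and min: "\<And>z. \<rho> x\<^sub>0 \<le> \<rho> z"
    and opt: "\<rho> x\<^sub>0 = (INF u\<in>U x\<^sub>0. worst_integral x\<^sub>0 u \<rho>)"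
  shows "\<rho> z = \<rho> x\<^sub>0"
proof (rule ccontr)
  assume "\<rho> z \<noteq> \<rho> x\<^sub>0"
  with min have less: "\<rho> x\<^sub>0 < \<rho> z" by (simp add: order_neq_le_trans)
  define d where "d = (\<rho> z - \<rho> x\<^sub>0) / 2"
  have d: "0 \<le> d" "\<rho> x\<^sub>0 + d < \<rho> z" using less by (simp_all add: d_def field_simps)
  obtain K where K: "\<And>z. \<bar>\<rho> z\<bar> \<le> K" using abs_bounds by blast
  have "\<rho> x\<^sub>0 + d * (R / 2) \<le> worst_integral x\<^sub>0 u \<rho>" if u: "u \<in> U x\<^sub>0" for u
  proof -
    obtain Q where "Q \<in> tv_ball R (Qo x\<^sub>0 u)" "\<rho> x\<^sub>0 + d * (R / 2) \<le> integral\<^sup>L Q \<rho>"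
      using tv_ball_integral_ge_point_mass[OF Qo_prob[OF u] Qo_sets[OF u] R_nonneg R_le_2 rho_meas K min d] .
    from cSUP_upper2[OF bdd_above_tv_ball_integrals[OF rho_meas K] this] show ?thesis
      unfolding worst_integral_def .
  qed
  then have "\<rho> x\<^sub>0 + d * (R / 2) \<le> (INF u\<in>U x\<^sub>0. worst_integral x\<^sub>0 u \<rho>)"
    by (rule cINF_greatest[OF U_ne])
  moreover have "0 < d * (R / 2)" using R_pos less by (simp add: d_def)
  ultimately show False using opt by linarith
qed

lemma SUP_tv_ball_split:
  assumes u: "u \<in> U x" and "R = 0 \<or> (\<forall>z. \<rho> z = r)"
  shows "(SUP Q\<in>tv_ball R (Qo x u). c * integral\<^sup>L Q \<rho> + (f x u + integral\<^sup>L Q h))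
       = c * worst_integral x u \<rho> + (f x u + worst_integral x u h)"
  using assms(2)
proof
  assume "R = 0"
  then have "tv_ball R (Qo x u) = {Qo x u}"
    using tv_ball_0[OF Qo_prob[OF u] Qo_sets[OF u]] by simp
  then show ?thesis by (simp add: worst_integral_def)
next
  assume "\<forall>z. \<rho> z = r"
  then have "\<rho> = (\<lambda>_. r)" by auto
  then have integral_\<rho>: "integral\<^sup>L Q \<rho> = r" if "Q \<in> tv_ball R N" for Q N
    using that prob_space.prob_space[of Q] by (simp add: tv_ball_def)
  obtain K where K: "\<And>z. \<bar>h z\<bar> \<le> K" using abs_bounds by blast
  have "(SUP Q\<in>tv_ball R (Qo x u). c * integral\<^sup>L Q \<rho> + (f x u + integral\<^sup>L Q h))
      = (SUP Q\<in>tv_ball R (Qo x u). (c * r + f x u) + integral\<^sup>L Q h)"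
    by (rule SUP_cong) (simp_all add: integral_\<rho>)
  also have "\<dots> = (c * r + f x u) + worst_integral x u h"
    by (rule SUP_const_plus_integral[OF u h_meas K])
  also have "r = worst_integral x u \<rho>"
  proof -
    have "worst_integral x u \<rho> = (SUP Q\<in>tv_ball R (Qo x u). r)"
      unfolding worst_integral_def by (rule SUP_cong) (simp_all add: integral_\<rho>)
    then show ?thesis using Qo_in_tv_ball[OF u] by (metis cSUP_const empty_iff)
  qed
  finally show ?thesis by simp
qed

lemma optimality_equations_lower_bounds:
  assumes opt: "optimality_equations \<phi>" and u: "u \<in> U x"
  shows "\<rho> x \<le> worst_integral x u \<rho>" "\<rho> x + h x \<le> f x u + worst_integral x u h"
proof -
  obtain K\<^sub>\<rho> K\<^sub>h C where K\<^sub>\<rho>: "\<And>z. \<bar>\<rho> z\<bar> \<le> K\<^sub>\<rho>" and K\<^sub>h: "\<And>z. \<bar>h z\<bar> \<le> K\<^sub>h"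
    and C: "\<And>u. u \<in> U x \<Longrightarrow> \<bar>f x u\<bar> \<le> C"
    using abs_bounds by meson
  have "\<rho> x = (INF u\<in>U x. worst_integral x u \<rho>)"
    using opt unfolding optimality_equations_def worst_integral_def by blast
  moreover have "bdd_below ((\<lambda>u. worst_integral x u \<rho>) ` U x)"
    using abs_worst_integral_le[OF _ rho_meas K\<^sub>\<rho>] by (intro bdd_belowI2[where m="- K\<^sub>\<rho>"]) force
  ultimately show "\<rho> x \<le> worst_integral x u \<rho>"
    using cINF_lower[OF _ u] by metis
  have "\<rho> x + h x = (INF u\<in>U x. SUP Q\<in>tv_ball R (Qo x u). f x u + integral\<^sup>L Q h)"
    using opt unfolding optimality_equations_def by blast
  also have "\<dots> = (INF u\<in>U x. f x u + worst_integral x u h)"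
    using SUP_const_plus_integral[OF _ h_meas K\<^sub>h] by (simp cong: INF_cong)
  finally have "\<rho> x + h x = (INF u\<in>U x. f x u + worst_integral x u h)" .
  moreover have "bdd_below ((\<lambda>u. f x u + worst_integral x u h) ` U x)"
    using C abs_worst_integral_le[OF _ h_meas K\<^sub>h] by (intro bdd_belowI2[where m="- C - K\<^sub>h"]) force
  ultimately show "\<rho> x + h x \<le> f x u + worst_integral x u h"
    using cINF_lower[OF _ u] by metis
qed

lemma optimality_equations_at_selector:
  assumes opt: "optimality_equations \<phi>" and \<phi>: "\<phi> x \<in> U x"
  shows "worst_integral x (\<phi> x) \<rho> = \<rho> x" "f x (\<phi> x) + worst_integral x (\<phi> x) h = \<rho> x + h x"
proof -
  obtain K where K: "\<And>z. \<bar>h z\<bar> \<le> K" using abs_bounds by blast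
  show "worst_integral x (\<phi> x) \<rho> = \<rho> x"
    using opt unfolding optimality_equations_def worst_integral_def by metis
  show "f x (\<phi> x) + worst_integral x (\<phi> x) h = \<rho> x + h x"
    using opt SUP_const_plus_integral[OF \<phi> h_meas K] unfolding optimality_equations_def by metis
qed

lemma degenerate_if_optimality_equations:
  assumes opt: "optimality_equations \<phi>" and min: "\<And>z. \<rho> x\<^sub>0 \<le> \<rho> z"
  shows "R = 0 \<or> (\<forall>z. \<rho> z = \<rho> x\<^sub>0)"
proof -
  have "\<rho> x\<^sub>0 = (INF u\<in>U x\<^sub>0. worst_integral x\<^sub>0 u \<rho>)"
    using opt unfolding optimality_equations_def worst_integral_def by blast
  then show ?thesis
    using constant_if_minimum_optimal[OF _ min] R_nonneg by force
qed

lemma Jstar_affine_if_optimality_equations: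
  assumes opt: "optimality_equations \<phi>" and V: "\<And>x. \<phi> x \<in> V x" "\<And>x. V x \<subseteq> U x"
    and min: "\<And>z. \<rho> x\<^sub>0 \<le> \<rho> z"
  shows "Jstar V f Qo R n h = (\<lambda>x. real n * \<rho> x + h x)"
proof (induction n)
  case 0
  show ?case by (simp add: fun_eq_iff)
next
  case (Suc n)
  have "Jstar V f Qo R (Suc n) h x = real n * \<rho> x + (\<rho> x + h x)" for x
  proof -
    have "Jstar V f Qo R (Suc n) h x
        = (INF u\<in>V x. real n * worst_integral x u \<rho> + (f x u + worst_integral x u h))"
      unfolding Jstar_Suc_if_affine[OF Suc.IH]
      using V(2) SUP_tv_ball_split[OF _ degenerate_if_optimality_equations[OF opt min]]
      by (intro INF_cong) blast+
    also have "\<dots> = real n * \<rho> x + (\<rho> x + h x)"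
    proof (rule cInf_eq_minimum)
      show "real n * \<rho> x + (\<rho> x + h x)
          \<in> (\<lambda>u. real n * worst_integral x u \<rho> + (f x u + worst_integral x u h)) ` V x"
        using V optimality_equations_at_selector[OF opt, of x] by force
      show "real n * \<rho> x + (\<rho> x + h x) \<le> y"
        if "y \<in> (\<lambda>u. real n * worst_integral x u \<rho> + (f x u + worst_integral x u h)) ` V x" for y
        using that V(2) optimality_equations_lower_bounds[OF opt]
        by (force intro: add_mono mult_left_mono)
    qed
    finally show ?thesis .
  qed
  then show ?case by (simp add: fun_eq_iff algebra_simps)
qed

lemma optimality_equations_if_Jstar_affine:
  assumes J: "\<And>n. Jstar U f Qo R n h = (\<lambda>x. real n * \<rho> x + h x)"
    and J\<^sub>\<phi>: "\<And>n. Jstar (\<lambda>x. {\<phi> x}) f Qo R n h = (\<lambda>x. real n * \<rho> x + h x)"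
    and \<phi>: "\<And>x. \<phi> x \<in> U x"
  shows "optimality_equations \<phi>"
proof -
  have "{\<phi> x} \<subseteq> U x" for x using \<phi> by blast
  then show ?thesis
    unfolding optimality_equations_def
    using optimality_if_Jstar_affine[OF J U_ne subset_refl]
      optimality_if_Jstar_affine[OF J\<^sub>\<phi> insert_not_empty]
    by auto
qed

end

theorem mainTheorem4:
  fixes U :: "'x::polish_space \<Rightarrow> 'u::polish_space set"
    and f :: "'x \<Rightarrow> 'u \<Rightarrow> real"
    and Qo :: "'x \<Rightarrow> 'u \<Rightarrow> 'x measure"
    and R :: real
    and \<rho> h :: "'x \<Rightarrow> real"
    and \<phi> :: "'x \<Rightarrow> 'u"
  assumes U_ne: "\<And>x. U x \<noteq> {}"
    and U_compact: "\<And>x. compact (U x)"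
    and U_meas: "\<And>x. U x \<in> sets borel"
    and F_ne: "selectors U \<noteq> {}"
    and f_nonneg: "\<And>x u. u \<in> U x \<Longrightarrow> 0 \<le> f x u"
    and f_bounded: "bounded ((\<lambda>(x, u). f x u) ` (SIGMA x:UNIV. U x))"
    and f_cont: "continuous_on (SIGMA x:UNIV. U x) (\<lambda>(x, u). f x u)"
    and Qo_sets: "\<And>x u. u \<in> U x \<Longrightarrow> sets (Qo x u) = sets borel"
    and Qo_prob: "\<And>x u. u \<in> U x \<Longrightarrow> prob_space (Qo x u)"
    and Qo_cont: "\<And>A. A \<in> sets borel \<Longrightarrow>
        continuous_on (SIGMA x:UNIV. U x) (\<lambda>(x, u). measure (Qo x u) A)"
    and R_range: "0 \<le> R" "R \<le> 2"
    and rho_bounded: "bounded (range \<rho>)"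
    and rho_cont: "continuous_on UNIV \<rho>"
    and rho_nonneg: "\<And>x. 0 \<le> \<rho> x"
    and rho_meas: "\<rho> \<in> borel_measurable borel"
    and rho_sup: "\<exists>x0. \<forall>x. \<rho> x \<le> \<rho> x0"
    and rho_inf: "\<exists>x0. \<forall>x. \<rho> x0 \<le> \<rho> x"
    and h_bounded: "bounded (range h)"
    and h_cont: "continuous_on UNIV h"
    and h_nonneg: "\<And>x. 0 \<le> h x"
    and h_meas: "h \<in> borel_measurable borel"
    and h_sup: "\<exists>x0. \<forall>x. h x \<le> h x0"
    and h_inf: "\<exists>x0. \<forall>x. h x0 \<le> h x"
    and phi_sel: "\<phi> \<in> selectors U"
  shows "canonical_triplet U f Qo R \<rho> h \<phi> \<longleftrightarrow>
    (\<forall>x.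
       \<rho> x = (INF u\<in>U x. SUP Q\<in>tv_ball R (Qo x u). integral\<^sup>L Q \<rho>) \<and>
       \<rho> x + h x = (INF u\<in>U x. SUP Q\<in>tv_ball R (Qo x u). f x u + integral\<^sup>L Q h) \<and>
       \<rho> x = (SUP Q\<in>tv_ball R (Qo x (\<phi> x)). integral\<^sup>L Q \<rho>) \<and>
       \<rho> x + h x = (SUP Q\<in>tv_ball R (Qo x (\<phi> x)). f x (\<phi> x) + integral\<^sup>L Q h))"
proof -
  interpret tv_minimax_model U f Qo R \<rho> h
    by (rule tv_minimax_model.intro)
      (fact U_ne f_bounded Qo_sets Qo_prob R_range rho_meas rho_bounded h_meas h_bounded)+
  have \<phi>: "\<And>x. \<phi> x \<in> U x" using phi_sel by (simp add: selectors_def)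
  then have \<phi>_sub: "\<And>x. {\<phi> x} \<subseteq> U x" by blast
  obtain x\<^sub>0 where min: "\<And>z. \<rho> x\<^sub>0 \<le> \<rho> z" using rho_inf by blast
  have "canonical_triplet U f Qo R \<rho> h \<phi> \<longleftrightarrow>
      (\<forall>n. Jstar U f Qo R n h = (\<lambda>x. real n * \<rho> x + h x) \<and>
           Jstar (\<lambda>x. {\<phi> x}) f Qo R n h = (\<lambda>x. real n * \<rho> x + h x))"
    unfolding canonical_triplet_def Jpol_eq_Jstar_singleton fun_eq_iff
    using rho_bounded rho_cont rho_nonneg rho_meas h_bounded h_cont h_nonneg h_meas phi_sel by auto
  also have "\<dots> \<longleftrightarrow> optimality_equations \<phi>"
    using optimality_equations_if_Jstar_affine[OF _ _ \<phi>]
      Jstar_affine_if_optimality_equations[OF _ \<phi> subset_refl min]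
      Jstar_affine_if_optimality_equations[OF _ singletonI \<phi>_sub min]
    by blast
  finally show ?thesis unfolding optimality_equations_def .
qed

end
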